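(* Let $\mathcal T\ge2$, $\mathcal S\ge\max\{2\mathcal T,6\}$, and $(t,x)\in\mathbb R\times\mathbb R^3$ with $|t-|x||\le1$ and $|x|\ge\max\{12,\mathcal T,2\mathcal S\}$. Then $$\int_{|x-y|\le t+\mathcal T}\frac{dy}{|x-y||y|^4}\mathbf 1_{\{|y|\ge\frac12(1+|t-|x-y||)\}}\le C(1+\mathcal T)\frac{1}{|x|},$$ with $C$ an absolute constant. *)

theory Defs
  imports "HOL-Analysis.Analysis"
begin

end

theory Submission
  imports Defs
begin

(* Split the integrand according to whether |y| < |x|/4. There |x - y| \<ge> |x|/2, so the integrand
   is at most (2/|x|) |y|^-4 restricted to |y| \<ge> 1/2, whose integral is finite because 4 > 3.
   Elsewhere |y|^-4 \<le> (4/|x|)^4, while |x - y|^-1 integrates to O(R^2) over a ball of radius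
   R = 3|x|, which contributes O(1/|x|^2). Both model integrals are bounded by a dyadic covering
   of the singularity: a function that is dominated at every point by one of the weighted
   indicators a_k 1_{B(c, \<rho>_k)} has integral at most vol(B_1) \<Sum> a_k \<rho>_k^n. *)

lemma nn_integral_le_ball_series:
  fixes c :: "'a::euclidean_space" and g :: "'a \<Rightarrow> real" and a \<rho> b :: "nat \<Rightarrow> real"
  assumes a: "\<And>k. 0 \<le> a k" and \<rho>: "\<And>k. 0 \<le> \<rho> k"
    and g_le: "\<And>y. \<exists>k. g y \<le> a k * indicator (cball c (\<rho> k)) y"
    and b: "\<And>k. a k * \<rho> k ^ DIM('a) \<le> b k" and sums: "b sums s"
  shows "(\<integral>\<^sup>+ y. ennreal (g y) \<partial>lborel) \<le> ennreal (unit_ball_vol DIM('a) * s)"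
proof -
  define V where "V = unit_ball_vol DIM('a)"
  have [measurable]: "cball c r \<in> sets borel" for r
    by (simp add: borel_closed)
  have ball_integral: "(\<integral>\<^sup>+ y. ennreal (a k * indicator (cball c (\<rho> k)) y) \<partial>lborel)
      = ennreal (V * (a k * \<rho> k ^ DIM('a)))" for k
  proof -
    have "(\<integral>\<^sup>+ y. ennreal (a k * indicator (cball c (\<rho> k)) y) \<partial>lborel)
        = ennreal (a k) * emeasure lborel (cball c (\<rho> k))"
      by (subst nn_integral_cmult_indicator[symmetric]) (auto intro!: nn_integral_cong simp: indicator_def)
    then show ?thesis
      using a[of k] \<rho>[of k] by (simp add: V_def emeasure_cball ennreal_mult'[symmetric] mult_ac)
  qed
  have summable: "summable (\<lambda>k. a k * \<rho> k ^ DIM('a))"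
  proof (rule summable_comparison_test'[OF sums_summable[OF sums]])
    show "norm (a k * \<rho> k ^ DIM('a)) \<le> b k" for k
      using a[of k] \<rho>[of k] b[of k] by simp
  qed
  have sum_le: "(\<Sum>k. a k * \<rho> k ^ DIM('a)) \<le> s"
    using suminf_le[OF b summable sums_summable[OF sums]] sums_unique[OF sums] by simp
  have "ennreal (g y) \<le> (\<Sum>k. ennreal (a k * indicator (cball c (\<rho> k)) y))" for y
  proof -
    obtain k where "g y \<le> a k * indicator (cball c (\<rho> k)) y"
      using g_le by blast
    then have "ennreal (g y) \<le> ennreal (a k * indicator (cball c (\<rho> k)) y)"
      by (rule ennreal_leI)
    also have "\<dots> \<le> (\<Sum>k. ennreal (a k * indicator (cball c (\<rho> k)) y))"
      using sum_le_suminf[OF summableI, of "{k}"] by simp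
    finally show ?thesis .
  qed
  then have "(\<integral>\<^sup>+ y. ennreal (g y) \<partial>lborel)
      \<le> (\<integral>\<^sup>+ y. (\<Sum>k. ennreal (a k * indicator (cball c (\<rho> k)) y)) \<partial>lborel)"
    by (intro nn_integral_mono)
  also have "\<dots> = (\<Sum>k. ennreal (V * (a k * \<rho> k ^ DIM('a))))"
    by (subst nn_integral_suminf) (simp_all add: ball_integral)
  also have "\<dots> = ennreal (V * (\<Sum>k. a k * \<rho> k ^ DIM('a)))"
    using a \<rho> summable by (simp add: V_def suminf_ennreal2 summable_mult suminf_mult)
  also have "\<dots> \<le> ennreal (V * s)"
    using sum_le by (intro ennreal_leI mult_left_mono) (simp_all add: V_def)
  finally show ?thesis
    by (simp add: V_def)
qed

lemma dyadic_scale_below: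
  fixes z R :: real
  assumes "0 < z" "z \<le> R"
  obtains k where "R / 2 ^ Suc k < z" "z \<le> R / 2 ^ k"
proof -
  have "\<exists>k. R / 2 ^ k < z"
    using real_arch_pow_inv[of "z / R" "1/2"] assms by (auto simp: field_simps)
  then have "\<exists>k. \<not> R / 2 ^ k < z \<and> R / 2 ^ Suc k < z"
    using assms by (intro exists_least_lemma) auto
  then show thesis
    using that by force
qed

lemma dyadic_scale_above:
  fixes z :: real
  assumes "1 \<le> 2 * z"
  obtains k where "z \<le> 2 ^ k" "2 ^ k \<le> 2 * z"
proof (cases "z \<le> 1")
  case True
  with assms that[of 0] show thesis by simp
next
  case False
  have "\<exists>k. \<not> z \<le> 2 ^ k \<and> z \<le> 2 ^ Suc k"
    using False real_arch_pow[of 2 z] by (intro exists_least_lemma) (auto intro: less_imp_le)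
  then obtain k where "2 ^ k < z" "z \<le> 2 ^ Suc k"
    using not_le by blast
  then show thesis
    by (intro that[of "Suc k"]) auto
qed

lemma inverse_norm_le_dyadic_ball:
  fixes x y :: "'a::real_normed_vector"
  assumes "0 < R"
  shows "\<exists>k. indicator {y. norm (x - y) \<le> R} y / norm (x - y)
           \<le> 2 ^ Suc k / R * indicator (cball x (R / 2 ^ k)) y"
proof (cases "y = x \<or> R < norm (x - y)")
  case True
  then show ?thesis
    using assms by (auto simp: indicator_def)
next
  case False
  then have pos: "0 < norm (x - y)" and "norm (x - y) \<le> R"
    by auto
  then obtain k where k: "R / 2 ^ Suc k < norm (x - y)" "norm (x - y) \<le> R / 2 ^ k"
    by (rule dyadic_scale_below)
  have "1 / norm (x - y) \<le> 2 ^ Suc k / R"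
    using k(1) assms pos by (simp add: field_simps)
  with k(2) False show ?thesis
    by (intro exI[of _ k]) (simp add: indicator_def dist_norm)
qed

lemma inverse_power4_le_dyadic_ball:
  fixes y :: "'a::real_normed_vector"
  shows "\<exists>k. indicator {y. 1/2 \<le> norm y} y / norm y ^ 4
           \<le> 16 / 16 ^ k * indicator (cball 0 (2 ^ k)) y"
proof (cases "1/2 \<le> norm y")
  case False
  then show ?thesis
    by (auto simp: indicator_def)
next
  case True
  then obtain k where k: "norm y \<le> 2 ^ k" "2 ^ k \<le> 2 * norm y"
    using dyadic_scale_above[of "norm y"] by auto
  have "(16::real) ^ k = (2 ^ 4) ^ k"
    by simp
  also have "\<dots> = (2 ^ k) ^ 4"
    by (metis power_mult mult.commute)
  also have "\<dots> \<le> (2 * norm y) ^ 4"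
    using k(2) by (intro power_mono) auto
  finally have "(16::real) ^ k \<le> (2 * norm y) ^ 4" .
  moreover have "0 < norm y"
    using True by linarith
  ultimately have "1 / norm y ^ 4 \<le> 16 / 16 ^ k"
    by (simp add: field_simps)
  with k(1) True show ?thesis
    by (intro exI[of _ k]) (simp add: indicator_def)
qed

lemma nn_integral_inverse_norm_cball_le:
  fixes x :: "'a::euclidean_space"
  assumes dim: "2 \<le> DIM('a)" and R: "0 < R"
  shows "(\<integral>\<^sup>+ y. ennreal (indicator {y. norm (x - y) \<le> R} y / norm (x - y)) \<partial>lborel)
           \<le> ennreal (unit_ball_vol DIM('a) * (4 * R ^ (DIM('a) - 1)))"
proof (rule nn_integral_le_ball_series)
  obtain m where m: "DIM('a) = Suc m" "1 \<le> m"
    using dim by (cases "DIM('a)") auto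
  show "2 ^ Suc k / R * (R / 2 ^ k) ^ DIM('a) \<le> 2 * R ^ (DIM('a) - 1) * (1/2) ^ k" for k :: nat
  proof -
    have "(2::real) ^ k \<le> (2 ^ k) ^ m"
      using m(2) by (simp add: self_le_power)
    then have "2 * R ^ m / (2 ^ k) ^ m \<le> 2 * R ^ m / 2 ^ k"
      using R by (intro divide_left_mono) auto
    moreover have "2 ^ Suc k / R * (R / 2 ^ k) ^ Suc m = 2 * R ^ m / (2 ^ k) ^ m"
      using R by (simp add: power_divide field_simps)
    ultimately show ?thesis
      using m(1) by (simp add: power_one_over)
  qed
  have "(\<lambda>k. 2 * R ^ (DIM('a) - 1) * (1/2::real) ^ k) sums (2 * R ^ (DIM('a) - 1) * (1 / (1 - 1/2)))"
    by (intro sums_mult geometric_sums) simp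
  then show "(\<lambda>k. 2 * R ^ (DIM('a) - 1) * (1/2::real) ^ k) sums (4 * R ^ (DIM('a) - 1))"
    by simp
qed (use R inverse_norm_le_dyadic_ball[OF R] in auto)

lemma nn_integral_inverse_power4_le:
  assumes dim: "DIM('a::euclidean_space) \<le> 3"
  shows "(\<integral>\<^sup>+ y. ennreal (indicator {y::'a. 1/2 \<le> norm y} y / norm y ^ 4) \<partial>lborel)
           \<le> ennreal (unit_ball_vol DIM('a) * 32)"
proof (rule nn_integral_le_ball_series)
  show "16 / 16 ^ k * (2 ^ k) ^ DIM('a) \<le> 16 * (1/2::real) ^ k" for k :: nat
  proof -
    have "((2::real) ^ k) ^ DIM('a) \<le> (2 ^ k) ^ 3"
      using dim by (intro power_increasing) auto
    also have "\<dots> = (2 ^ 3) ^ k"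
      by (metis power_mult mult.commute)
    finally have "16 / 16 ^ k * (2 ^ k) ^ DIM('a) \<le> 16 / 16 ^ k * (8::real) ^ k"
      by (intro mult_left_mono) auto
    also have "\<dots> = 16 * (8 / 16) ^ k"
      unfolding power_divide by simp
    finally show ?thesis
      by simp
  qed
  have "(\<lambda>k. 16 * (1/2::real) ^ k) sums (16 * (1 / (1 - 1/2)))"
    by (intro sums_mult geometric_sums) simp
  then show "(\<lambda>k. 16 * (1/2::real) ^ k) sums 32"
    by simp
qed (use inverse_power4_le_dyadic_ball in auto)

lemma inverse_dist_mult_power4_le_far_plus_near:
  fixes x y :: "'a::real_normed_vector"
  assumes A: "A \<subseteq> {y. norm (x - y) \<le> R \<and> 1/2 \<le> norm y}" and x: "x \<noteq> 0"
  shows "indicator A y / (norm (x - y) * norm y ^ 4)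
           \<le> 2 / norm x * (indicator {y. 1/2 \<le> norm y} y / norm y ^ 4)
             + (4 / norm x) ^ 4 * (indicator {y. norm (x - y) \<le> R} y / norm (x - y))"
    (is "?lhs \<le> ?far + ?near")
proof (cases "y \<in> A \<and> y \<noteq> x")
  case False
  then show ?thesis
    by (auto simp: indicator_def)
next
  case True
  with A have R: "norm (x - y) \<le> R" and half: "1/2 \<le> norm y"
    by auto
  have d: "0 < norm (x - y)" and r: "0 < norm x"
    using True x by auto
  have "0 < norm y"
    using half by linarith
  then have n: "0 < norm y ^ 4"
    by simp
  have lhs: "?lhs = 1 / norm (x - y) * (1 / norm y ^ 4)"
    using True by simp
  have far: "?far = 2 / norm x * (1 / norm y ^ 4)" and near: "?near = (4 / norm x) ^ 4 * (1 / norm (x - y))"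
    using R half by auto
  show ?thesis
  proof (cases "norm y < norm x / 4")
    case True
    moreover have "norm x \<le> norm (x - y) + norm y"
      using norm_triangle_ineq[of "x - y" y] by simp
    ultimately have "norm x / 2 \<le> norm (x - y)"
      using \<open>0 < norm y\<close> by linarith
    then have "1 / norm (x - y) \<le> 2 / norm x"
      using d r by (simp add: field_simps)
    then have "?lhs \<le> ?far"
      unfolding lhs far using n by (intro mult_right_mono) auto
    moreover have "0 \<le> ?near"
      unfolding near using d by simp
    ultimately show ?thesis
      by linarith
  next
    case False
    then have "(norm x / 4) ^ 4 \<le> norm y ^ 4"
      using r by (intro power_mono) auto
    then have "1 / norm y ^ 4 \<le> (4 / norm x) ^ 4"
      using n r by (simp add: field_simps power_divide)
    then have "?lhs \<le> ?near"
      unfolding lhs near using d by (subst mult.commute) (intro mult_right_mono, auto)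
    moreover have "0 \<le> ?far"
      unfolding far using r n by simp
    ultimately show ?thesis
      by linarith
  qed
qed

lemma nn_integral_inverse_dist_mult_power4_le:
  fixes x :: "'a::euclidean_space"
  assumes dim: "DIM('a) = 3" and A: "A \<subseteq> {y. norm (x - y) \<le> R \<and> 1/2 \<le> norm y}"
    and x: "x \<noteq> 0" and R: "0 < R"
  shows "(\<integral>\<^sup>+ y. ennreal (indicator A y / (norm (x - y) * norm y ^ 4)) \<partial>lborel)
           \<le> ennreal (unit_ball_vol 3 * (64 / norm x + 1024 * R ^ 2 / norm x ^ 4))"
proof -
  define V where "V = unit_ball_vol 3"
  define far where "far y = indicator {y. 1/2 \<le> norm y} y / norm y ^ 4" for y :: 'a
  define near where "near y = indicator {y. norm (x - y) \<le> R} y / norm (x - y)" for y :: 'a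
  have [measurable]: "far \<in> borel_measurable borel" "near \<in> borel_measurable borel"
    unfolding far_def near_def by measurable
  have far_nonneg: "0 \<le> far y" and near_nonneg: "0 \<le> near y" for y
    unfolding far_def near_def by auto
  have "(\<integral>\<^sup>+ y. ennreal (indicator A y / (norm (x - y) * norm y ^ 4)) \<partial>lborel)
      \<le> (\<integral>\<^sup>+ y. ennreal (2 / norm x) * ennreal (far y) + ennreal ((4 / norm x) ^ 4) * ennreal (near y) \<partial>lborel)"
  proof (rule nn_integral_mono)
    fix y
    have "ennreal (indicator A y / (norm (x - y) * norm y ^ 4))
        \<le> ennreal (2 / norm x * far y + (4 / norm x) ^ 4 * near y)"
      unfolding far_def near_def by (intro ennreal_leI inverse_dist_mult_power4_le_far_plus_near A x)
    then show "ennreal (indicator A y / (norm (x - y) * norm y ^ 4))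
        \<le> ennreal (2 / norm x) * ennreal (far y) + ennreal ((4 / norm x) ^ 4) * ennreal (near y)"
      using far_nonneg[of y] near_nonneg[of y] by (simp flip: ennreal_mult)
  qed
  also have "\<dots> = ennreal (2 / norm x) * (\<integral>\<^sup>+ y. far y \<partial>lborel)
                 + ennreal ((4 / norm x) ^ 4) * (\<integral>\<^sup>+ y. near y \<partial>lborel)"
    by (simp add: nn_integral_add nn_integral_cmult)
  also have "\<dots> \<le> ennreal (2 / norm x) * ennreal (V * 32)
                 + ennreal ((4 / norm x) ^ 4) * ennreal (V * (4 * R ^ 2))"
    using nn_integral_inverse_power4_le[where 'a='a] nn_integral_inverse_norm_cball_le[OF _ R, of x] dim
    unfolding far_def near_def V_def by (intro add_mono mult_left_mono) auto
  also have "\<dots> = ennreal (V * (64 / norm x + 1024 * R ^ 2 / norm x ^ 4))"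
    by (simp add: V_def ennreal_plus field_simps flip: ennreal_mult)
  finally show ?thesis
    by (simp add: V_def)
qed

theorem lemmaE11:
  shows "\<exists>C::real. \<forall>(T::real) (S::real) (t::real) (x::real^3).
    T \<ge> 2 \<longrightarrow> S \<ge> max (2*T) 6 \<longrightarrow> \<bar>t - norm x\<bar> \<le> 1 \<longrightarrow>
    norm x \<ge> max 12 (max T (2*S)) \<longrightarrow>
    (\<integral>\<^sup>+ y. ennreal (indicator {y. norm (x - y) \<le> t + T \<and>
                         norm y \<ge> (1 + \<bar>t - norm (x - y)\<bar>) / 2} y
                    / (norm (x - y) * norm y ^ 4)) \<partial>lborel)
      \<le> ennreal (C * (1 + T) / norm x)"
proof (intro exI allI impI)
  fix T S t :: real and x :: "real^3"
  assume T: "T \<ge> 2" and "S \<ge> max (2*T) 6" and t: "\<bar>t - norm x\<bar> \<le> 1"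
    and x: "norm x \<ge> max 12 (max T (2*S))"
  have x_large: "12 \<le> norm x" "T \<le> norm x"
    using x by auto
  have "{y. norm (x - y) \<le> t + T \<and> norm y \<ge> (1 + \<bar>t - norm (x - y)\<bar>) / 2}
          \<subseteq> {y. norm (x - y) \<le> 3 * norm x \<and> 1/2 \<le> norm y}"
    using t x_large by (auto simp: abs_le_iff)
  then have "(\<integral>\<^sup>+ y. ennreal (indicator {y. norm (x - y) \<le> t + T \<and>
                         norm y \<ge> (1 + \<bar>t - norm (x - y)\<bar>) / 2} y
                    / (norm (x - y) * norm y ^ 4)) \<partial>lborel)
      \<le> ennreal (unit_ball_vol 3 * (64 / norm x + 1024 * (3 * norm x) ^ 2 / norm x ^ 4))"
    using x_large by (intro nn_integral_inverse_dist_mult_power4_le) auto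
  also have "\<dots> \<le> ennreal (832 * unit_ball_vol 3 * (1 + T) / norm x)"
  proof (intro ennreal_leI)
    have "1024 * (3 * norm x) ^ 2 / norm x ^ 4 = 9216 / norm x / norm x"
      using x_large by (simp add: field_simps power2_eq_square power4_eq_xxxx)
    also have "\<dots> \<le> 768 / norm x"
      using x_large by (intro divide_right_mono) (auto simp: divide_le_eq)
    finally have "64 / norm x + 1024 * (3 * norm x) ^ 2 / norm x ^ 4 \<le> 832 / norm x"
      by simp
    also have "\<dots> \<le> 832 * (1 + T) / norm x"
      using x_large T by (intro divide_right_mono) auto
    finally have "64 / norm x + 1024 * (3 * norm x) ^ 2 / norm x ^ 4 \<le> 832 * (1 + T) / norm x" .
    from mult_left_mono[OF this, of "unit_ball_vol 3"]
    show "unit_ball_vol 3 * (64 / norm x + 1024 * (3 * norm x) ^ 2 / norm x ^ 4)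
        \<le> 832 * unit_ball_vol 3 * (1 + T) / norm x"
      by (simp add: algebra_simps)
  qed
  finally show "(\<integral>\<^sup>+ y. ennreal (indicator {y. norm (x - y) \<le> t + T \<and>
                         norm y \<ge> (1 + \<bar>t - norm (x - y)\<bar>) / 2} y
                    / (norm (x - y) * norm y ^ 4)) \<partial>lborel)
      \<le> ennreal (832 * unit_ball_vol 3 * (1 + T) / norm x)" .
qed

end
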